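(* Let $V$ be a Majorana representation with identity $\mathbb 1$ satisfying axiom M2', and let $x,y\in V$ be idempotents. The following are equivalent: (i) $(x,y)=0$; (ii) $x\cdot y=0$; (iii) $x+y$ is an idempotent.
   Context: A transposition group $(G,T)$ is a finite group $G$ with a $G$-stable set $T$ of involutions generating $G$. A Majorana representation of $(G,T)$ is a quintuple $(G,T,V,\varphi,\psi)$ where $V$ is a commutative non-associative real algebra with a (positive definite) inner product $(\,,)$, $\varphi:G\to GL(V)$ is a representation with $\varphi(G)\le \mathrm{Aut}(V)$, and $\psi:T\to V\setminus\{0\}$ is injective with $\psi(t^g)=\psi(t)^{\varphi(g)}$, such that: (M1) $(u,v\cdot w)=(u\cdot v,w)$ for all $u,v,w$; (M2) $(u\cdot u,v\cdot v)\ge (u\cdot v,u\cdot v)$ for all $u,v$; (M3) elements of $\psi(T)$ (Majorana axes) are idempotents of length $1$; (M4) each Majorana axis $a$ has $\mathrm{ad}_a:u\mapsto a\cdot u$ diagonalizable with eigenvalues in $\{0,1,\frac1{4},\frac1{32}\}$; (M5) $1$ is a simple eigenvalue of each Majorana axis; (M6) for each axis $a$ the linear map $\tau(a)$ acting as $(-1)^{32\mu}$ on the $\mu$-eigenspace of $\mathrm{ad}_a$ is an algebra automorphism; (M7) for each axis $a$ the map $\sigma(a)$ on $C_V(\tau(a))$ acting as $(-1)^{4\mu}$ on the $\mu$-eigenspaces, $\mu\ne\frac1{32}$, preserves the product of $C_V(\tau(a))$; (M8) $\tau(\psi(t))=\varphi(t)$ for all $t\in T$. Axiom M2': the Norton inequality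 holds for all $u,v$, with equality precisely when $\mathrm{ad}_u$ and $\mathrm{ad}_v$ commute. *)

theory Defs
  imports "HOL-Analysis.Analysis" "HOL-Algebra.Group" "HOL-Algebra.Generated_Groups"
begin

text \<open>The algebra V is the whole type 'v (a real inner product space, positive definite);
  the product is a bilinear map m :: 'v => 'v => 'v.\<close>

definition eigsp :: "('v::real_vector \<Rightarrow> 'v \<Rightarrow> 'v) \<Rightarrow> 'v \<Rightarrow> real \<Rightarrow> 'v set" where
  "eigsp m a \<mu> = {v. m a v = \<mu> *\<^sub>R v}"

definition is_idempotent :: "('v \<Rightarrow> 'v \<Rightarrow> 'v) \<Rightarrow> 'v \<Rightarrow> bool" where
  "is_idempotent m x \<longleftrightarrow> m x x = x"

definition is_alg_aut :: "('v::real_vector \<Rightarrow> 'v \<Rightarrow> 'v) \<Rightarrow> ('v \<Rightarrow> 'v) \<Rightarrow> bool" where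
  "is_alg_aut m f \<longleftrightarrow> linear f \<and> bij f \<and> (\<forall>u v. f (m u v) = m (f u) (f v))"

definition transposition_group :: "('g, 'b) monoid_scheme \<Rightarrow> 'g set \<Rightarrow> bool" where
  "transposition_group G T \<longleftrightarrow> group G \<and> finite (carrier G) \<and> T \<subseteq> carrier G \<and>
     (\<forall>t\<in>T. t \<noteq> \<one>\<^bsub>G\<^esub> \<and> t \<otimes>\<^bsub>G\<^esub> t = \<one>\<^bsub>G\<^esub>) \<and>
     (\<forall>t\<in>T. \<forall>g\<in>carrier G. inv\<^bsub>G\<^esub> g \<otimes>\<^bsub>G\<^esub> t \<otimes>\<^bsub>G\<^esub> g \<in> T) \<and>
     generate G T = carrier G"

definition M4_axis :: "('v::real_vector \<Rightarrow> 'v \<Rightarrow> 'v) \<Rightarrow> 'v \<Rightarrow> bool" where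
  "M4_axis m a \<longleftrightarrow> (\<forall>v. \<exists>v0 v1 v2 v3. v0 \<in> eigsp m a 0 \<and> v1 \<in> eigsp m a 1 \<and>
       v2 \<in> eigsp m a (1/4) \<and> v3 \<in> eigsp m a (1/32) \<and> v = v0 + v1 + v2 + v3)"

definition M5_axis :: "('v::real_vector \<Rightarrow> 'v \<Rightarrow> 'v) \<Rightarrow> 'v \<Rightarrow> bool" where
  "M5_axis m a \<longleftrightarrow> eigsp m a 1 = range (\<lambda>c. c *\<^sub>R a)"

text \<open>f acts as (-1)^(32 mu) on the mu-eigenspaces of ad_a (i.e. f is the map tau(a)).\<close>
definition is_tau :: "('v::real_vector \<Rightarrow> 'v \<Rightarrow> 'v) \<Rightarrow> 'v \<Rightarrow> ('v \<Rightarrow> 'v) \<Rightarrow> bool" where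
  "is_tau m a f \<longleftrightarrow> linear f \<and>
     (\<forall>\<mu>\<in>{0, 1, 1/4}. \<forall>v\<in>eigsp m a \<mu>. f v = v) \<and>
     (\<forall>v\<in>eigsp m a (1/32). f v = - v)"

text \<open>C_V(tau(a)) = sum of the 0, 1, 1/4 eigenspaces of ad_a.\<close>
definition cent_tau :: "('v::real_vector \<Rightarrow> 'v \<Rightarrow> 'v) \<Rightarrow> 'v \<Rightarrow> 'v set" where
  "cent_tau m a = {v0 + v1 + v2 | v0 v1 v2. v0 \<in> eigsp m a 0 \<and> v1 \<in> eigsp m a 1 \<and>
       v2 \<in> eigsp m a (1/4)}"

text \<open>f acts on C_V(tau(a)) as (-1)^(4 mu) on the mu-eigenspaces (mu in {0,1,1/4}).\<close>
definition is_sigma :: "('v::real_vector \<Rightarrow> 'v \<Rightarrow> 'v) \<Rightarrow> 'v \<Rightarrow> ('v \<Rightarrow> 'v) \<Rightarrow> bool" where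
  "is_sigma m a f \<longleftrightarrow> linear f \<and>
     (\<forall>\<mu>\<in>{0, 1}. \<forall>v\<in>eigsp m a \<mu>. f v = v) \<and>
     (\<forall>v\<in>eigsp m a (1/4). f v = - v)"

definition majorana_rep ::
  "('g, 'b) monoid_scheme \<Rightarrow> 'g set \<Rightarrow> ('v::real_inner \<Rightarrow> 'v \<Rightarrow> 'v) \<Rightarrow> ('g \<Rightarrow> 'v \<Rightarrow> 'v) \<Rightarrow> ('g \<Rightarrow> 'v) \<Rightarrow> bool"
  where
  "majorana_rep G T m \<phi> \<psi> \<longleftrightarrow>
     transposition_group G T \<and>
     \<comment> \<open>V is a commutative (non-associative) real algebra\<close>
     bilinear m \<and> (\<forall>u v. m u v = m v u) \<and>
     \<comment> \<open>phi is a representation G -> GL(V) (right action) with image in Aut(V)\<close>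
     (\<forall>g\<in>carrier G. is_alg_aut m (\<phi> g)) \<and>
     \<phi> \<one>\<^bsub>G\<^esub> = id \<and>
     (\<forall>g\<in>carrier G. \<forall>h\<in>carrier G. \<phi> (g \<otimes>\<^bsub>G\<^esub> h) = \<phi> h \<circ> \<phi> g) \<and>
     \<comment> \<open>psi : T -> V - {0} injective and equivariant\<close>
     inj_on \<psi> T \<and> (\<forall>t\<in>T. \<psi> t \<noteq> 0) \<and>
     (\<forall>t\<in>T. \<forall>g\<in>carrier G. \<psi> (inv\<^bsub>G\<^esub> g \<otimes>\<^bsub>G\<^esub> t \<otimes>\<^bsub>G\<^esub> g) = \<phi> g (\<psi> t)) \<and>
     \<comment> \<open>(M1)\<close>
     (\<forall>u v w. inner u (m v w) = inner (m u v) w) \<and>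
     \<comment> \<open>(M2) Norton inequality\<close>
     (\<forall>u v. inner (m u u) (m v v) \<ge> inner (m u v) (m u v)) \<and>
     \<comment> \<open>(M3)\<close>
     (\<forall>t\<in>T. m (\<psi> t) (\<psi> t) = \<psi> t \<and> inner (\<psi> t) (\<psi> t) = 1) \<and>
     \<comment> \<open>(M4), (M5)\<close>
     (\<forall>t\<in>T. M4_axis m (\<psi> t) \<and> M5_axis m (\<psi> t)) \<and>
     \<comment> \<open>(M6) tau(a) is an algebra automorphism\<close>
     (\<forall>t\<in>T. \<exists>\<tau>. is_tau m (\<psi> t) \<tau> \<and> is_alg_aut m \<tau>) \<and>
     \<comment> \<open>(M7) sigma(a) preserves the product of C_V(tau(a))\<close>
     (\<forall>t\<in>T. \<exists>\<sigma>. is_sigma m (\<psi> t) \<sigma> \<and>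
         (\<forall>u\<in>cent_tau m (\<psi> t). \<forall>v\<in>cent_tau m (\<psi> t). \<sigma> (m u v) = m (\<sigma> u) (\<sigma> v))) \<and>
     \<comment> \<open>(M8) tau(psi t) = phi t\<close>
     (\<forall>t\<in>T. is_tau m (\<psi> t) (\<phi> t))"

definition M2' :: "('v::real_inner \<Rightarrow> 'v \<Rightarrow> 'v) \<Rightarrow> bool" where
  "M2' m \<longleftrightarrow> (\<forall>u v. inner (m u u) (m v v) \<ge> inner (m u v) (m u v) \<and>
     (inner (m u u) (m v v) = inner (m u v) (m u v) \<longleftrightarrow>
        (\<forall>w. m u (m v w) = m v (m u w))))"

definition is_identity :: "('v \<Rightarrow> 'v \<Rightarrow> 'v) \<Rightarrow> 'v \<Rightarrow> bool" where
  "is_identity m e \<longleftrightarrow> (\<forall>v. m e v = v)"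

end

theory Submission
  imports Defs
begin

text \<open>Only bilinearity, commutativity, associativity of the form (M1) and the Norton inequality
  (M2) are needed; the identity and the equality case of M2' play no role.
  For idempotents, (M1) gives \<open>(x, y) = (x\<cdot>x, y\<cdot>y)\<close>, so Norton's inequality reads
  \<open>(x, y) \<ge> |x\<cdot>y|\<^sup>2\<close>, while \<open>(x, y) = (x, x\<cdot>y)\<close> vanishes when \<open>x\<cdot>y = 0\<close>.
  Expanding \<open>(x + y)\<cdot>(x + y) = x + y + 2 x\<cdot>y\<close> gives the second equivalence.\<close>

lemma idempotent_inner_eq_zero_iff_mult_eq_zero:
  fixes m :: "'v::real_inner \<Rightarrow> 'v \<Rightarrow> 'v"
  assumes assoc_inner: "\<And>u v w. inner u (m v w) = inner (m u v) w"
    and norton: "\<And>u v. inner (m u v) (m u v) \<le> inner (m u u) (m v v)"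
    and "is_idempotent m x" and "is_idempotent m y"
  shows "inner x y = 0 \<longleftrightarrow> m x y = 0"
proof
  have xx: "m x x = x" and yy: "m y y = y"
    using assms(3,4) by (simp_all add: is_idempotent_def)
  assume "inner x y = 0"
  then have "inner (m x y) (m x y) \<le> 0"
    using norton[of x y] xx yy by simp
  then show "m x y = 0"
    by (metis inner_eq_zero_iff inner_ge_zero order_antisym)
next
  have "inner x (m x y) = inner x y"
    using assoc_inner[of x x y] assms(3) by (simp add: is_idempotent_def)
  moreover assume "m x y = 0"
  ultimately show "inner x y = 0"
    by simp
qed

lemma idempotent_square_add:
  fixes m :: "'v::real_vector \<Rightarrow> 'v \<Rightarrow> 'v"
  assumes "bilinear m" and "\<And>u v. m u v = m v u"
    and "is_idempotent m x" and "is_idempotent m y"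
  shows "m (x + y) (x + y) = x + y + 2 *\<^sub>R m x y"
  using bilinear_ladd[OF assms(1)] bilinear_radd[OF assms(1)] assms(2)[of y x] assms(3,4)
  by (simp add: is_idempotent_def scaleR_2 algebra_simps)

lemma idempotent_add_iff_mult_eq_zero:
  fixes m :: "'v::real_vector \<Rightarrow> 'v \<Rightarrow> 'v"
  assumes "bilinear m" and "\<And>u v. m u v = m v u"
    and "is_idempotent m x" and "is_idempotent m y"
  shows "is_idempotent m (x + y) \<longleftrightarrow> m x y = 0"
  unfolding is_idempotent_def idempotent_square_add[OF assms] by simp

theorem mainTheorem4:
  fixes G :: "('g, 'b) monoid_scheme" and T :: "'g set"
    and m :: "'v::real_inner \<Rightarrow> 'v \<Rightarrow> 'v"
    and \<phi> :: "'g \<Rightarrow> 'v \<Rightarrow> 'v" and \<psi> :: "'g \<Rightarrow> 'v"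
    and e x y :: 'v
  assumes "majorana_rep G T m \<phi> \<psi>"
    and "is_identity m e"
    and "M2' m"
    and "is_idempotent m x" and "is_idempotent m y"
  shows "(inner x y = 0 \<longleftrightarrow> m x y = 0) \<and> (m x y = 0 \<longleftrightarrow> is_idempotent m (x + y))"
proof -
  have "bilinear m" and "\<And>u v. m u v = m v u"
    and "\<And>u v w. inner u (m v w) = inner (m u v) w"
    and "\<And>u v. inner (m u v) (m u v) \<le> inner (m u u) (m v v)"
    using assms(1) unfolding majorana_rep_def by auto
  note mult_props = this
  show ?thesis
    using idempotent_inner_eq_zero_iff_mult_eq_zero[OF mult_props(3,4) assms(4,5)]
      idempotent_add_iff_mult_eq_zero[OF mult_props(1,2) assms(4,5)]
    by blast
qed

end
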